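(* Let $X$ and $Y$ be complete metric spaces, $k\ge2$, with nonexpansive $k$-means $\mu$ on $X$ and $\nu$ on $Y$ that are coordinatewise $\rho$-contractive and coordinatewise $\rho'$-contractive respectively ($0<\rho,\rho'<1$), and let $\mu_n,\nu_n$ ($n\ge k$) be their iterated $\beta$-extensions. Let $\le$ be a closed partial order on $Y$ for which $\nu$ is monotone. If $g:X\to Y$ is continuous and $g\circ\mu\le\nu\circ g_k$ (resp. $g\circ\mu\ge\nu\circ g_k$) pointwise on $X^k$, then for every $n\ge k$, $g\circ\mu_n\le\nu_n\circ g_n$ (resp. $g\circ\mu_n\ge\nu_n\circ g_n$) pointwise on $X^n$.
   Context: A $k$-mean is a map $\mu:X^k\to X$ with $\mu(x,\ldots,x)=x$. Nonexpansive: $d(\mu(\mathbf{x}),\mu(\mathbf{y}))\le\max_j d(x_j,y_j)$; coordinatewise $\rho$-contractive: $d(\mu(\mathbf{x}),\mu(\mathbf{y}))\le\rho\,d(x_j,y_j)$ when $\mathbf{x},\mathbf{y}$ differ only in coordinate $j$. $g_n(x_1,\ldots,x_n)=(g(x_1),\ldots,g(x_n))$. A $k$-mean $\nu$ is monotone if $y_i\le y_i'$ for all $i$ implies $\nu(\mathbf{y})\le\nu(\mathbf{y}')$. A partial order is closed if its graph is closed in $Y\times Y$. Barycentric operator of a $k$-mean: $\beta(\mathbf{x})_j=\mu(x_1,\ldots,\widehat{x_j},\ldots,x_{k+1})$; $\mu_k=\mu$ and $\mu_{n+1}$ is the unique continuous $(n+1)$-mean with $\beta_{\mu_n}^r(\mathbf{x})\to(\mu_{n+1}(\mathbf{x}),\ldots,\mu_{n+1}(\mathbf{x}))$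 for all $\mathbf{x}$; similarly for $\nu_n$. *)

theory Defs
  imports "HOL-Analysis.Analysis"
begin

text \<open>Points of X^n are represented as lists of length n.\<close>

definition is_mean :: "nat \<Rightarrow> ('a list \<Rightarrow> 'a) \<Rightarrow> bool" where
  "is_mean n m \<longleftrightarrow> (\<forall>x. m (replicate n x) = x)"

definition nonexpansive_mean :: "nat \<Rightarrow> ('a::metric_space list \<Rightarrow> 'a) \<Rightarrow> bool" where
  "nonexpansive_mean n m \<longleftrightarrow>
     (\<forall>xs ys. length xs = n \<longrightarrow> length ys = n \<longrightarrow>
        dist (m xs) (m ys) \<le> Max {dist (xs ! j) (ys ! j) | j. j < n})"

definition coord_contractive :: "nat \<Rightarrow> real \<Rightarrow> ('a::metric_space list \<Rightarrow> 'a) \<Rightarrow> bool" where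
  "coord_contractive n \<rho> m \<longleftrightarrow>
     (\<forall>xs ys j. length xs = n \<longrightarrow> length ys = n \<longrightarrow> j < n \<longrightarrow>
        (\<forall>i<n. i \<noteq> j \<longrightarrow> xs ! i = ys ! i) \<longrightarrow>
        dist (m xs) (m ys) \<le> \<rho> * dist (xs ! j) (ys ! j))"

definition cont_mean :: "nat \<Rightarrow> ('a::metric_space list \<Rightarrow> 'a) \<Rightarrow> bool" where
  "cont_mean n m \<longleftrightarrow>
     (\<forall>xs s. length xs = n \<longrightarrow> (\<forall>r. length (s r) = n) \<longrightarrow>
        (\<forall>j<n. (\<lambda>r. s r ! j) \<longlonglongrightarrow> xs ! j) \<longrightarrow> (\<lambda>r. m (s r)) \<longlonglongrightarrow> m xs)"

definition beta :: "('a list \<Rightarrow> 'a) \<Rightarrow> 'a list \<Rightarrow> 'a list" where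
  "beta m xs = map (\<lambda>j. m (take j xs @ drop (Suc j) xs)) [0..<length xs]"

definition beta_extensions :: "nat \<Rightarrow> ('a::metric_space list \<Rightarrow> 'a) \<Rightarrow> (nat \<Rightarrow> 'a list \<Rightarrow> 'a) \<Rightarrow> bool" where
  "beta_extensions k mu mus \<longleftrightarrow>
     (\<forall>xs. length xs = k \<longrightarrow> mus k xs = mu xs) \<and>
     (\<forall>n\<ge>k. is_mean (Suc n) (mus (Suc n)) \<and> cont_mean (Suc n) (mus (Suc n)) \<and>
        (\<forall>xs. length xs = Suc n \<longrightarrow>
           (\<forall>j<Suc n. (\<lambda>r. ((beta (mus n) ^^ r) xs) ! j) \<longlonglongrightarrow> mus (Suc n) xs)))"

end

theory Submission
  imports Defs
begin

text \<open>
  Induction on \<open>n \<ge> k\<close>, proving the monotonicity of \<open>\<nu>\<^sub>n\<close> alongside. If \<open>\<nu>\<^sub>n\<close> is monotone, so is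
  its barycentric operator, coordinatewise; if moreover \<open>g \<circ> \<mu>\<^sub>n \<le> \<nu>\<^sub>n \<circ> g\<^sub>n\<close>, then every iterate of
  the barycentric operator of \<open>\<mu>\<^sub>n\<close>, pushed forward by \<open>g\<close>, lies coordinatewise below the
  corresponding iterate of that of \<open>\<nu>\<^sub>n\<close>. The iterates converge to the diagonal points
  \<open>\<mu>\<^sub>n\<^sub>+\<^sub>1(x)\<close> and \<open>\<nu>\<^sub>n\<^sub>+\<^sub>1(g\<^sub>n\<^sub>+\<^sub>1(x))\<close>; since \<open>g\<close> is continuous and the order is closed, both
  inequalities survive in the limit. The reverse inequality is the same statement for the
  converse order.
\<close>

definition mono_mean :: "nat \<Rightarrow> ('a \<Rightarrow> 'a \<Rightarrow> bool) \<Rightarrow> ('a list \<Rightarrow> 'a) \<Rightarrow> bool" where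
  "mono_mean n R m \<longleftrightarrow>
     (\<forall>ys ys'. length ys = n \<longrightarrow> length ys' = n \<longrightarrow> list_all2 R ys ys' \<longrightarrow> R (m ys) (m ys'))"

definition beta_limit :: "nat \<Rightarrow> ('a::topological_space list \<Rightarrow> 'a) \<Rightarrow> ('a list \<Rightarrow> 'a) \<Rightarrow> bool" where
  "beta_limit n m m' \<longleftrightarrow>
     (\<forall>xs. length xs = Suc n \<longrightarrow> (\<forall>j<Suc n. (\<lambda>r. (beta m ^^ r) xs ! j) \<longlonglongrightarrow> m' xs))"

lemma beta_extensionsD:
  assumes "beta_extensions k mu mus"
  shows beta_extensions_base: "length xs = k \<Longrightarrow> mus k xs = mu xs"
    and beta_extensions_limit: "k \<le> n \<Longrightarrow> beta_limit n (mus n) (mus (Suc n))"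
  using assms by (auto simp: beta_extensions_def beta_limit_def)

lemma beta_limitD:
  "beta_limit n m m' \<Longrightarrow> length xs = Suc n \<Longrightarrow> (\<lambda>r. (beta m ^^ r) xs ! 0) \<longlonglongrightarrow> m' xs"
  by (simp add: beta_limit_def)

lemma length_beta [simp]: "length (beta m xs) = length xs"
  by (simp add: beta_def)

lemma nth_beta: "j < length xs \<Longrightarrow> beta m xs ! j = m (take j xs @ drop (Suc j) xs)"
  by (simp add: beta_def)

lemma length_funpow_beta [simp]: "length ((beta m ^^ r) xs) = length xs"
  by (induction r) auto

lemma list_all2_remove_nth:
  "list_all2 R xs ys \<Longrightarrow> list_all2 R (take j xs @ drop (Suc j) xs) (take j ys @ drop (Suc j) ys)"
  by (intro list_all2_appendI list_all2_takeI list_all2_dropI)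

lemma closed_rel_conversep:
  assumes "closed {(y, z). R y z}"
  shows "closed {(y, z). R\<inverse>\<inverse> y z}"
proof -
  have "{(y, z). R\<inverse>\<inverse> y z} = prod.swap -` {(y, z). R y z}"
    by auto
  then show ?thesis
    using closed_vimage[OF assms continuous_on_swap] by simp
qed

lemma closed_rel_tendsto:
  assumes "closed {(y, z). R y z}" "X \<longlonglongrightarrow> y" "Y \<longlonglongrightarrow> z" "\<And>r. R (X r) (Y r)"
  shows "R y z"
proof -
  have "(\<lambda>r. (X r, Y r)) \<longlonglongrightarrow> (y, z)"
    using assms(2,3) by (rule tendsto_Pair)
  then have "(y, z) \<in> {(y, z). R y z}"
    by (rule closed_sequentially[OF assms(1), rotated]) (simp add: assms(4))
  then show ?thesis by simp
qed

lemma mono_mean_conversep: "mono_mean n R m \<Longrightarrow> mono_mean n R\<inverse>\<inverse> m"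
  by (simp add: mono_mean_def list.rel_flip)

lemma mono_meanD:
  assumes "mono_mean n R m" "list_all2 R ys ys'" "length ys = n"
  shows "R (m ys) (m ys')"
  using assms list_all2_lengthD[OF assms(2)] by (simp add: mono_mean_def)

lemma list_all2_funpow_beta:
  assumes mono: "mono_mean n R m" and "length xs = Suc n" and "list_all2 R xs ys"
  shows "list_all2 R ((beta m ^^ r) xs) ((beta m ^^ r) ys)"
proof (induction r)
  case 0
  show ?case using assms(3) by simp
next
  case (Suc r)
  let ?a = "(beta m ^^ r) xs" and ?b = "(beta m ^^ r) ys"
  have len: "length ?a = Suc n" "length ?b = Suc n"
    using assms(2) list_all2_lengthD[OF assms(3)] by simp_all
  have "R (beta m ?a ! j) (beta m ?b ! j)" if "j < Suc n" for j
  proof -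
    have "R (m (take j ?a @ drop (Suc j) ?a)) (m (take j ?b @ drop (Suc j) ?b))"
      using that len by (intro mono_meanD[OF mono list_all2_remove_nth[OF Suc.IH]]) simp
    with that len show ?thesis
      by (simp add: nth_beta)
  qed
  with len show ?case
    by (simp add: list_all2_conv_all_nth)
qed

lemma mono_mean_beta_limit:
  assumes "closed {(y, z). R y z}" "mono_mean n R m" "beta_limit n m m'"
  shows "mono_mean (Suc n) R m'"
  unfolding mono_mean_def
proof (intro allI impI)
  fix ys ys' :: "'a list"
  assume len: "length ys = Suc n" "length ys' = Suc n" and R: "list_all2 R ys ys'"
  have "R ((beta m ^^ r) ys ! 0) ((beta m ^^ r) ys' ! 0)" for r
    using list_all2_funpow_beta[OF assms(2) len(1) R, of r] len
    by (simp add: list_all2_conv_all_nth)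
  then show "R (m' ys) (m' ys')"
    by (rule closed_rel_tendsto[OF assms(1) beta_limitD[OF assms(3) len(1)]
          beta_limitD[OF assms(3) len(2)]])
qed

lemma list_all2_map_funpow_beta:
  assumes "reflp R" "transp R" and mono: "mono_mean n R nu"
    and dom: "\<And>xs. length xs = n \<Longrightarrow> R (g (mu xs)) (nu (map g xs))"
    and "length xs = Suc n"
  shows "list_all2 R (map g ((beta mu ^^ r) xs)) ((beta nu ^^ r) (map g xs))"
proof (induction r)
  case 0
  show ?case
    using \<open>reflp R\<close> by (simp add: list.rel_map list.rel_refl reflpD)
next
  case (Suc r)
  let ?a = "(beta mu ^^ r) xs" and ?b = "(beta nu ^^ r) (map g xs)"
  have len: "length ?a = Suc n" "length ?b = Suc n"
    using assms(5) by auto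
  have "R (g (beta mu ?a ! j)) (beta nu ?b ! j)" if j: "j < Suc n" for j
  proof -
    let ?a' = "take j ?a @ drop (Suc j) ?a" and ?b' = "take j ?b @ drop (Suc j) ?b"
    have "R (g (mu ?a')) (nu (map g ?a'))"
      using dom[of ?a'] j len by simp
    moreover have "list_all2 R (map g ?a') ?b'"
      using list_all2_remove_nth[OF Suc.IH, of j] by (simp add: take_map drop_map)
    then have "R (nu (map g ?a')) (nu ?b')"
      using j len by (intro mono_meanD[OF mono]) simp_all
    ultimately have "R (g (mu ?a')) (nu ?b')"
      by (rule transpD[OF \<open>transp R\<close>])
    with j len show ?thesis
      by (simp add: nth_beta)
  qed
  with len show ?case
    by (simp add: list_all2_conv_all_nth)
qed

lemma dominated_beta_limit:
  fixes g :: "'a::metric_space \<Rightarrow> 'b::metric_space"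
  assumes "closed {(y, z). R y z}" "reflp R" "transp R" "continuous_on UNIV g"
    and mono: "mono_mean n R nu"
    and dom: "\<And>xs. length xs = n \<Longrightarrow> R (g (mu xs)) (nu (map g xs))"
    and lim: "beta_limit n mu mu'" "beta_limit n nu nu'"
    and len: "length xs = Suc n"
  shows "R (g (mu' xs)) (nu' (map g xs))"
proof -
  have "isCont g (mu' xs)"
    using \<open>continuous_on UNIV g\<close> by (simp add: continuous_on_eq_continuous_at)
  then have "(\<lambda>r. g ((beta mu ^^ r) xs ! 0)) \<longlonglongrightarrow> g (mu' xs)"
    using beta_limitD[OF lim(1) len] by (rule isCont_tendsto_compose)
  moreover have "(\<lambda>r. (beta nu ^^ r) (map g xs) ! 0) \<longlonglongrightarrow> nu' (map g xs)"
    using beta_limitD[OF lim(2)] len by simp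
  moreover have "R (g ((beta mu ^^ r) xs ! 0)) ((beta nu ^^ r) (map g xs) ! 0)" for r
    using list_all2_map_funpow_beta[OF assms(2,3) mono dom len, of r] len
    by (simp add: list_all2_conv_all_nth)
  ultimately show ?thesis
    by (rule closed_rel_tendsto[OF assms(1)])
qed

lemma beta_extensions_dominated:
  fixes mus :: "nat \<Rightarrow> 'a::metric_space list \<Rightarrow> 'a"
    and nus :: "nat \<Rightarrow> 'b::metric_space list \<Rightarrow> 'b"
  assumes "closed {(y, z). R y z}" "reflp R" "transp R" "continuous_on UNIV g"
    and mus: "beta_extensions k mu mus" and nus: "beta_extensions k nu nus"
    and mono: "mono_mean k R nu"
    and dom: "\<And>xs. length xs = k \<Longrightarrow> R (g (mu xs)) (nu (map g xs))"
    and "k \<le> n" "length xs = n"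
  shows "R (g (mus n xs)) (nus n (map g xs))"
proof -
  have "mono_mean n R (nus n) \<and> (\<forall>xs. length xs = n \<longrightarrow> R (g (mus n xs)) (nus n (map g xs)))"
    using \<open>k \<le> n\<close>
  proof (induction n rule: dec_induct)
    case base
    show ?case
      using mono dom beta_extensions_base[OF mus] beta_extensions_base[OF nus]
      by (simp add: mono_mean_def)
  next
    case (step n)
    then have mono_n: "mono_mean n R (nus n)"
      and dom_n: "\<And>xs. length xs = n \<Longrightarrow> R (g (mus n xs)) (nus n (map g xs))"
      by auto
    have lim: "beta_limit n (mus n) (mus (Suc n))" "beta_limit n (nus n) (nus (Suc n))"
      using beta_extensions_limit[OF mus] beta_extensions_limit[OF nus] step.hyps by auto
    show ?case
      using mono_mean_beta_limit[OF assms(1) mono_n lim(2)]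
        dominated_beta_limit[OF assms(1-4) mono_n dom_n lim]
      by blast
  qed
  with \<open>length xs = n\<close> show ?thesis by blast
qed

theorem theorem9p3:
  fixes mu :: "'a::complete_space list \<Rightarrow> 'a"
    and nu :: "'b::complete_space list \<Rightarrow> 'b"
    and mus :: "nat \<Rightarrow> 'a list \<Rightarrow> 'a"
    and nus :: "nat \<Rightarrow> 'b list \<Rightarrow> 'b"
    and le :: "'b \<Rightarrow> 'b \<Rightarrow> bool"
    and g :: "'a \<Rightarrow> 'b"
    and k :: nat and \<rho> \<rho>' :: real
  assumes k: "k \<ge> 2"
    and mu_mean: "is_mean k mu" and nu_mean: "is_mean k nu"
    and mu_ne: "nonexpansive_mean k mu" and nu_ne: "nonexpansive_mean k nu"
    and rho: "0 < \<rho>" "\<rho> < 1" and rho': "0 < \<rho>'" "\<rho>' < 1"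
    and mu_c: "coord_contractive k \<rho> mu" and nu_c: "coord_contractive k \<rho>' nu"
    and mus: "beta_extensions k mu mus" and nus: "beta_extensions k nu nus"
    and le_refl: "\<And>y. le y y"
    and le_antisym: "\<And>y z. le y z \<Longrightarrow> le z y \<Longrightarrow> y = z"
    and le_trans: "\<And>x y z. le x y \<Longrightarrow> le y z \<Longrightarrow> le x z"
    and le_closed: "closed {(y, z). le y z}"
    and nu_mono: "\<And>ys ys'. length ys = k \<Longrightarrow> length ys' = k \<Longrightarrow>
                    list_all2 le ys ys' \<Longrightarrow> le (nu ys) (nu ys')"
    and g_cont: "continuous_on UNIV g"
  shows "((\<forall>xs. length xs = k \<longrightarrow> le (g (mu xs)) (nu (map g xs))) \<longrightarrow>
            (\<forall>n\<ge>k. \<forall>xs. length xs = n \<longrightarrow> le (g (mus n xs)) (nus n (map g xs))))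
       \<and> ((\<forall>xs. length xs = k \<longrightarrow> le (nu (map g xs)) (g (mu xs))) \<longrightarrow>
            (\<forall>n\<ge>k. \<forall>xs. length xs = n \<longrightarrow> le (nus n (map g xs)) (g (mus n xs))))"
proof -
  \<comment> \<open>The mean, nonexpansiveness and contraction hypotheses only guarantee that the
      \<open>\<beta>\<close>-extensions exist.\<close>
  have refl: "reflp le" "reflp le\<inverse>\<inverse>"
    using le_refl by (auto intro: reflpI)
  have trans: "transp le" "transp le\<inverse>\<inverse>"
    using le_trans by (auto intro: transpI)
  have "mono_mean k le nu"
    using nu_mono by (simp add: mono_mean_def)
  then have mono: "mono_mean k le nu" "mono_mean k le\<inverse>\<inverse> nu"
    using mono_mean_conversep by auto
  note closed = le_closed closed_rel_conversep[OF le_closed]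
  show ?thesis
    using beta_extensions_dominated[OF closed(1) refl(1) trans(1) g_cont mus nus mono(1)]
      beta_extensions_dominated[OF closed(2) refl(2) trans(2) g_cont mus nus mono(2)]
    by (simp only: conversep_iff) blast
qed

end
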